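(* Consider the signal design problem described in the context: maximize over $T\ge2\delta$ the average flow-rate $\bar g(T)=\min\{\phi_1(T),(1-\frac{2\delta}{T})\pi_0C,\phi_2(T)\}$, where in $\phi_1,\phi_2$ the ratio $\pi$ is approximated by $\pi_0$. Then the optimal cycle lengths are: (1) Very sparse traffic, $k_0\in[0,\pi_0\bar K)$: the maximum is $\bar g^*\approx Vk_0$, with multiple optimal cycle lengths $T^*=\frac1{j_1}\frac LV$ for positive integers $j_1$ such that $Vk_0\le(1-\frac{2\delta}{T^*})\pi_0C$. (2) Sparse traffic, $k_0\in[\pi_0\bar K,\bar K)$: the maximum is determined by the intersection of $(1-\frac{2\delta}T)\pi_0C$ with the last decreasing branch $\frac{k_0L}{T}$ of $\phi_1$, namely $\bar g^*\approx\max_{T\in[\frac LV,\frac1{\pi_0}\frac LV]}\min\{\frac{k_0L}{T},(1-\frac{2\delta}T)\pi_0C\}$, with a unique optimal cycle length $T^*=\frac{k_0L}{\pi_0C}+2\delta$. (3) Critical traffic, $k_0=\bar K$: the maximum is determined by $(1-\frac{2\delta}T)\pi_0C$, and the unique optimal cycle length is $T^*=\infty$. (4) Dense traffic, $k_0\in(\bar K,K-\pi_0\frac CW]$: the maximum is determined by the intersection of $(1-\frac{2\delta}T)\pi_0C$ with the last decreasing branch $\frac{(K-k_0)L}{T}$ of $\phi_2$, namely $\bar g^*\approx\max_{T\in[\frac LW,\frac1{\pi_0}\frac LW]}\min\{\frac{(K-k_0)L}{T},(1-\frac{2\delta}T)\pi_0C\}$, with a unique optimal cycle length $T^*=\frac{(K-k_0)L}{\pi_0C}+2\delta$.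 (5) Very dense traffic, $k_0\in(K-\pi_0\frac CW,K]$: the maximum is $\bar g^*\approx(K-k_0)W$, with multiple optimal cycle lengths $T^*=\frac1{j_2}\frac LW$ for positive integers $j_2$ such that $(K-k_0)W\le(1-\frac{2\delta}{T^*})\pi_0C$.
   Context: Signalized ring road of length $L>0$ with LWR traffic, triangular fundamental diagram $Q(k)=\min\{Vk,(K-k)W\}$, $\bar K=\frac{W}{V+W}K$, $C=V\bar K$, average density $k_0\in[0,K]$, pretimed two-phase signal with cycle length $T$. With a start-up lost time $\delta>0$ per phase and a fixed allocation ratio $\pi_0\in(0,1)$ of the total effective green time $T-2\delta$, the effective green ratio is $\pi=(1-\frac{2\delta}T)\pi_0$, $T\ge2\delta$. In stationary states the average flow-rate is $\bar g=\min\{\phi_1,\pi C,\phi_2\}$ with $\phi_1=\frac{k_0}{k_1}\pi C$, $\phi_2=\frac{K-k_0}{K-k_2}\pi C$, where $\frac LV=(j_1+\alpha_1)T$, $j_1=\lfloor L/(VT)\rfloor$, $0\le\alpha_1<1$, $\frac LW=(j_2+\alpha_2)T$, $j_2=\lfloor L/(WT)\rfloor$, $0\le\alpha_2<1$, $k_1=\frac{j_1+\min\{\alpha_1/\pi,1\}}{j_1+\alpha_1}\pi\bar K$, $k_2=K-\frac{j_2+\min\{\alpha_2/\pi,1\}}{j_2+\alpha_2}\pi\frac CW$. Assuming $L/V$ and $L/W$ are much larger than $2\delta$, $\pi$ is replaced by $\pi_0$ in $\phi_1,\phi_2$ (but not in the term $\pi C=(1-\frac{2\delta}T)\pi_0C$),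 and the objective is $\max_{T\ge2\delta}\min\{\phi_1,(1-\frac{2\delta}T)\pi_0C,\phi_2\}$.
   Formalization: Case (1) (resp. (5)) holds only when some positive integer $j_1$ (resp. $j_2$) satisfies $Vk_0\le(1-\frac{2\delta}{T^*})\pi_0C$ (resp. $(K-k_0)W\le(1-\frac{2\delta}{T^*})\pi_0C$), and case (2) (resp. (4)) only when its $T^*$ is below $\frac1{\pi_0}\frac LV$ (resp. $\frac1{\pi_0}\frac LW$). The statement above fails without it. *)

theory Defs
  imports Complex_Main
begin

text \<open>Triangular fundamental diagram parameters: free-flow speed V, shock-wave speed W,
  jam density K. Critical density and capacity.\<close>

definition Kbar :: "real \<Rightarrow> real \<Rightarrow> real \<Rightarrow> real" where
  "Kbar K V W = W / (V + W) * K"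

definition Cap :: "real \<Rightarrow> real \<Rightarrow> real \<Rightarrow> real" where
  "Cap K V W = V * Kbar K V W"

text \<open>k1 and k2 with pi replaced by pi0; L/V = (j1 + alpha1) T etc.\<close>

definition k1 :: "real \<Rightarrow> real \<Rightarrow> real \<Rightarrow> real \<Rightarrow> real \<Rightarrow> real \<Rightarrow> real" where
  "k1 L V W K pi0 T =
     (let x = L / (V * T); j = real_of_int \<lfloor>x\<rfloor>; a = x - j
      in (j + min (a / pi0) 1) / (j + a) * pi0 * Kbar K V W)"

definition k2 :: "real \<Rightarrow> real \<Rightarrow> real \<Rightarrow> real \<Rightarrow> real \<Rightarrow> real \<Rightarrow> real" where
  "k2 L V W K pi0 T =
     (let x = L / (W * T); j = real_of_int \<lfloor>x\<rfloor>; a = x - j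
      in K - (j + min (a / pi0) 1) / (j + a) * pi0 * (Cap K V W / W))"

definition phi1 :: "real \<Rightarrow> real \<Rightarrow> real \<Rightarrow> real \<Rightarrow> real \<Rightarrow> real \<Rightarrow> real \<Rightarrow> real" where
  "phi1 L V W K k0 pi0 T = k0 / k1 L V W K pi0 T * pi0 * Cap K V W"

definition phi2 :: "real \<Rightarrow> real \<Rightarrow> real \<Rightarrow> real \<Rightarrow> real \<Rightarrow> real \<Rightarrow> real \<Rightarrow> real" where
  "phi2 L V W K k0 pi0 T = (K - k0) / (K - k2 L V W K pi0 T) * pi0 * Cap K V W"

definition capline :: "real \<Rightarrow> real \<Rightarrow> real \<Rightarrow> real \<Rightarrow> real \<Rightarrow> real \<Rightarrow> real" where
  "capline V W K delta pi0 T = (1 - 2 * delta / T) * pi0 * Cap K V W"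

definition gbar :: "real \<Rightarrow> real \<Rightarrow> real \<Rightarrow> real \<Rightarrow> real \<Rightarrow> real \<Rightarrow> real \<Rightarrow> real \<Rightarrow> real" where
  "gbar L V W K k0 delta pi0 T =
     min (min (phi1 L V W K k0 pi0 T) (capline V W K delta pi0 T)) (phi2 L V W K k0 pi0 T)"

definition optset :: "(real \<Rightarrow> real) \<Rightarrow> real \<Rightarrow> real set" where
  "optset g delta = {T. 2 * delta \<le> T \<and> (\<forall>T'. 2 * delta \<le> T' \<longrightarrow> g T' \<le> g T)}"

end

theory Submission
  imports Defs
begin

text \<open>
  With \<open>x = L / (V T) = j\<^sub>1 + \<alpha>\<^sub>1\<close>, the branch \<open>\<phi>\<^sub>1\<close> equals \<open>V k\<^sub>0\<close> times the factor
  \<open>x / (j\<^sub>1 + min (\<alpha>\<^sub>1 / \<pi>\<^sub>0) 1)\<close>, which lies in \<open>[\<pi>\<^sub>0, 1]\<close> and equals 1 exactly when the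
  free-flow travel time \<open>L / V\<close> is an integer number of cycles; symmetrically for \<open>\<phi>\<^sub>2\<close>
  with \<open>(K - k\<^sub>0) W\<close> and \<open>L / W\<close>. In the very sparse (very dense) regime the bound \<open>V k\<^sub>0\<close>
  (\<open>(K - k\<^sub>0) W\<close>) lies below the two other terms, so it is the maximum and is attained exactly
  at those integer cycle lengths where the lost-time capacity is not binding. In the sparse
  (dense) regime the other branch never binds; on its last branch \<open>\<phi>\<^sub>1 = k\<^sub>0 L / T\<close> decreases
  in \<open>T\<close> while the lost-time capacity \<open>(1 - 2\<delta>/T) \<pi>\<^sub>0 C\<close> increases, so the objective peaks
  exactly where they cross. At the critical density both branches dominate the capacity term,
  which increases towards \<open>\<pi>\<^sub>0 C\<close> without attaining it.
\<close>

definition flow_fraction :: "real \<Rightarrow> real \<Rightarrow> real" where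
  "flow_fraction p x = x / (of_int \<lfloor>x\<rfloor> + min (frac x / p) 1)"

lemma flow_fraction_denominator:
  fixes x p :: real
  assumes "0 < x" "0 < p" "p < 1"
  defines "D \<equiv> of_int \<lfloor>x\<rfloor> + min (frac x / p) 1"
  shows "x \<le> D" "p * D \<le> x" "D = x \<longleftrightarrow> x \<in> \<int>"
proof -
  have x: "x = of_int \<lfloor>x\<rfloor> + frac x" by (simp add: frac_def)
  have floor_nonneg: "0 \<le> real_of_int \<lfloor>x\<rfloor>" using assms(1) by simp
  have frac_le: "frac x \<le> frac x / p" using assms(2,3) by (simp add: le_divide_eq mult_left_le)
  then show "x \<le> D" unfolding D_def using frac_lt_1[of x] by (subst x) linarith
  have "p * min (frac x / p) 1 = min (frac x) p" using assms(2) by (simp add: min_mult_distrib_left)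
  moreover have "p * of_int \<lfloor>x\<rfloor> \<le> of_int \<lfloor>x\<rfloor>"
    using floor_nonneg assms(2,3) by (simp add: mult_left_le_one_le)
  ultimately show "p * D \<le> x" unfolding D_def by (subst (3) x) (simp add: distrib_left)
  have "min (frac x / p) 1 = frac x \<longleftrightarrow> frac x = 0"
  proof
    assume eq: "min (frac x / p) 1 = frac x"
    show "frac x = 0"
    proof (rule ccontr)
      assume "frac x \<noteq> 0"
      then have "frac x < frac x / p"
        using assms(2,3) frac_ge_0[of x] by (simp add: less_divide_eq)
      then show False using eq frac_lt_1[of x] by linarith
    qed
  qed (simp del: frac_eq_0_iff)
  then show "D = x \<longleftrightarrow> x \<in> \<int>" unfolding D_def by (subst (2) x) simp
qed

lemma flow_fraction_bounds:
  assumes "0 < x" "0 < p" "p < 1"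
  shows "p \<le> flow_fraction p x" "flow_fraction p x \<le> 1"
  using flow_fraction_denominator[OF assms] assms(1)
  unfolding flow_fraction_def by (simp_all add: le_divide_eq divide_le_eq)

lemma flow_fraction_eq_1_iff:
  assumes "0 < x" "0 < p" "p < 1"
  shows "flow_fraction p x = 1 \<longleftrightarrow> x \<in> \<int>"
proof -
  have "0 < of_int \<lfloor>x\<rfloor> + min (frac x / p) 1"
    using flow_fraction_denominator(1)[OF assms] assms(1) by linarith
  then show ?thesis using flow_fraction_denominator(3)[OF assms]
    unfolding flow_fraction_def by (auto simp: divide_eq_1_iff)
qed

lemma flow_fraction_of_nat [simp]: "n \<ge> 1 \<Longrightarrow> flow_fraction p (real n) = 1"
  unfolding flow_fraction_def frac_def by simp

lemma flow_fraction_below_1: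
  assumes "0 < x" "x < 1" "0 < p"
  shows "flow_fraction p x = max x p"
proof -
  have "\<lfloor>x\<rfloor> = 0" "frac x = x" using assms(1,2) by (simp_all add: floor_eq_iff frac_eq)
  moreover have "x / min (x / p) 1 = max x p"
  proof (cases "x \<le> p")
    case True
    then show ?thesis using assms by (simp add: divide_le_eq_1)
  next
    case False
    then show ?thesis using assms by (simp add: min_def divide_le_eq_1)
  qed
  ultimately show ?thesis by (simp add: flow_fraction_def)
qed

lemma flow_fraction_last_branch:
  assumes "0 < L" "0 < s" "0 < p" "0 \<le> q" "L / s < T"
  shows "s * q * flow_fraction p (L / (s * T)) = max (q * L / T) (s * q * p)"
proof -
  have T: "0 < T" using assms(1,2,5) by (meson divide_pos_pos less_trans)
  have "L / (s * T) < 1" using assms(2,5) T by (simp add: field_simps)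
  moreover have "0 < L / (s * T)" using assms(1,2) T by simp
  ultimately have "flow_fraction p (L / (s * T)) = max (L / (s * T)) p"
    using flow_fraction_below_1 assms(3) by blast
  moreover have "s * q * (L / (s * T)) = q * L / T" using assms(2) by simp
  ultimately show ?thesis using assms(2,4) by (simp add: max_mult_distrib_left)
qed

lemma phi1_eq_flow_fraction:
  assumes "0 < L" "0 < V" "0 < W" "0 < K" "0 < p" "p < 1" "0 < T"
  shows "phi1 L V W K k0 p T = V * k0 * flow_fraction p (L / (V * T))"
proof -
  define x where "x = L / (V * T)"
  define D where "D = of_int \<lfloor>x\<rfloor> + min (frac x / p) 1"
  have "0 < x" using assms by (simp add: x_def)
  then have "0 < D" using flow_fraction_denominator(1)[OF _ assms(5,6)] by (fastforce simp: D_def)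
  have k1: "k1 L V W K p T = D / x * p * Kbar K V W"
    unfolding k1_def Let_def x_def[symmetric] D_def by (simp add: frac_def)
  have "0 < Kbar K V W" using assms by (simp add: Kbar_def)
  have "phi1 L V W K k0 p T = k0 / (D / x * p * Kbar K V W) * p * (V * Kbar K V W)"
    by (simp add: phi1_def Cap_def k1)
  also have "\<dots> = V * k0 * (x / D)"
    using \<open>0 < D\<close> \<open>0 < x\<close> \<open>0 < Kbar K V W\<close> assms(5) by (simp add: field_simps)
  finally show ?thesis by (simp add: flow_fraction_def x_def D_def)
qed

lemma phi2_eq_flow_fraction:
  assumes "0 < L" "0 < V" "0 < W" "0 < K" "0 < p" "p < 1" "0 < T"
  shows "phi2 L V W K k0 p T = (K - k0) * W * flow_fraction p (L / (W * T))"
proof -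
  define x where "x = L / (W * T)"
  define D where "D = of_int \<lfloor>x\<rfloor> + min (frac x / p) 1"
  have "0 < x" using assms by (simp add: x_def)
  then have "0 < D" using flow_fraction_denominator(1)[OF _ assms(5,6)] by (fastforce simp: D_def)
  have k2: "K - k2 L V W K p T = D / x * p * (Cap K V W / W)"
    unfolding k2_def Let_def x_def[symmetric] D_def by (simp add: frac_def)
  have "0 < Cap K V W" using assms by (simp add: Kbar_def Cap_def)
  have "phi2 L V W K k0 p T = (K - k0) / (D / x * p * (Cap K V W / W)) * p * Cap K V W"
    by (simp add: phi2_def k2)
  also have "\<dots> = (K - k0) * W * (x / D)"
    using \<open>0 < D\<close> \<open>0 < x\<close> \<open>0 < Cap K V W\<close> assms(3,5) by (simp add: field_simps)
  finally show ?thesis by (simp add: flow_fraction_def x_def D_def)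
qed

lemma lost_time_capacity_strict_mono:
  fixes T T' delta p C :: real
  assumes "0 < T" "T < T'" "0 < delta" "0 < p" "0 < C"
  shows "(1 - 2 * delta / T) * p * C < (1 - 2 * delta / T') * p * C"
  using assms by (simp add: divide_strict_left_mono)

lemma lost_time_capacity_le:
  fixes T delta p C :: real
  assumes "0 < T" "0 \<le> delta" "0 \<le> p" "0 \<le> C"
  shows "(1 - 2 * delta / T) * p * C \<le> p * C"
proof -
  have "0 \<le> 2 * delta / T * (p * C)" using assms by simp
  then show ?thesis by (simp add: left_diff_distrib mult.assoc)
qed

lemma capline_tendsto: "(capline V W K delta pi0 \<longlongrightarrow> pi0 * Cap K V W) at_top"
proof -
  have "((\<lambda>T. 2 * delta / T) \<longlongrightarrow> 0) at_top"
    by (intro tendsto_divide_0[OF tendsto_const] filterlim_at_top_imp_at_infinity filterlim_ident)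
  then have "((\<lambda>T. (1 - 2 * delta / T) * pi0 * Cap K V W) \<longlongrightarrow> (1 - 0) * pi0 * Cap K V W) at_top"
    by (intro tendsto_intros)
  then show ?thesis by (simp add: capline_def[abs_def])
qed

lemma optset_eq_singleton:
  assumes "2 * delta \<le> T\<^sub>0" "\<And>T. 2 * delta \<le> T \<Longrightarrow> T \<noteq> T\<^sub>0 \<Longrightarrow> g T < g T\<^sub>0"
  shows "optset g delta = {T\<^sub>0}"
  using assms unfolding optset_def by (force simp: not_less[symmetric])

lemma SUP_min_at_crossing:
  fixes f h :: "real \<Rightarrow> real"
  assumes "a \<le> c" "c \<le> b" "f c = h c"
    and "\<And>T. T \<in> {a..b} \<Longrightarrow> T \<le> c \<Longrightarrow> h T \<le> h c"
    and "\<And>T. T \<in> {a..b} \<Longrightarrow> c \<le> T \<Longrightarrow> f T \<le> f c"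
  shows "(SUP T \<in> {a..b}. min (f T) (h T)) = f c"
proof (rule cSup_eq_maximum)
  show "f c \<in> (\<lambda>T. min (f T) (h T)) ` {a..b}"
    using assms(1-3) by (intro image_eqI[of _ _ c]) auto
next
  fix y assume "y \<in> (\<lambda>T. min (f T) (h T)) ` {a..b}"
  then obtain T where T: "T \<in> {a..b}" and y: "y = min (f T) (h T)" by blast
  show "y \<le> f c"
  proof (cases "T \<le> c")
    case True
    then show ?thesis using assms(3) assms(4)[OF T] y by linarith
  next
    case False
    then show ?thesis using assms(5)[OF T] y by linarith
  qed
qed

text \<open>The sparse regime is the instance \<open>P = \<phi>\<^sub>1\<close>, \<open>s = V\<close>, \<open>q = k\<^sub>0\<close>; the dense one
  \<open>P = \<phi>\<^sub>2\<close>, \<open>s = W\<close>, \<open>q = K - k\<^sub>0\<close>.\<close>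

lemma optset_at_crossing:
  fixes P Q cl G :: "real \<Rightarrow> real"
  assumes L: "0 < L" and s: "0 < s" and delta: "0 < delta" and p: "0 < p" "p < 1" and C: "0 < C"
    and capacity_le: "p * C \<le> s * q"
    and P: "\<And>T. 0 < T \<Longrightarrow> P T = s * q * flow_fraction p (L / (s * T))"
    and Q: "\<And>T. 0 < T \<Longrightarrow> p * C \<le> Q T"
    and cl: "\<And>T. cl T = (1 - 2 * delta / T) * p * C"
    and G: "\<And>T. G T = min (min (P T) (cl T)) (Q T)"
    and crossing_le: "q * L / (p * C) + 2 * delta < L / (p * s)"
  shows "optset G delta = {q * L / (p * C) + 2 * delta} \<and>
      G (q * L / (p * C) + 2 * delta) = q * L / (q * L / (p * C) + 2 * delta) \<and>
      G (q * L / (p * C) + 2 * delta) = cl (q * L / (p * C) + 2 * delta) \<and>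
      G (q * L / (p * C) + 2 * delta)
        = (SUP T \<in> {L / s .. L / (p * s)}. min (q * L / T) (cl T))"
proof -
  define Ts where "Ts = q * L / (p * C) + 2 * delta"
  have pC: "0 < p * C" using p C by simp
  then have "0 < s * q" using capacity_le by linarith
  then have q: "0 < q" using s by (simp add: zero_less_mult_iff)
  have "0 < q * L / (p * C)" using q L pC by simp
  then have Ts: "0 < Ts" "2 * delta < Ts" using delta by (simp_all add: Ts_def)
  have "cl Ts = (Ts - 2 * delta) / Ts * p * C" using Ts(1) by (simp add: cl diff_divide_distrib)
  also have "\<dots> = q * L / Ts" using p C by (simp add: Ts_def)
  finally have cl_Ts: "cl Ts = q * L / Ts" .
  have "L / s \<le> q * L / (p * C)"
    using capacity_le L q pC s by (simp add: field_simps mult_left_mono)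
  then have Ts_lower: "L / s < Ts" using delta by (simp add: Ts_def)
  have Ts_upper: "Ts < L / (p * s)" using crossing_le by (simp add: Ts_def)
  then have branch_Ts: "s * q * p < q * L / Ts"
    using p s q Ts(1) by (simp add: field_simps)
  have P_branch: "P T = max (q * L / T) (s * q * p)" if "L / s < T" for T
  proof -
    have "0 < T" using L s that by (meson divide_pos_pos less_trans)
    then show ?thesis using flow_fraction_last_branch[OF L s p(1) less_imp_le[OF q] that] P by simp
  qed
  have "0 < 2 * delta / Ts * (p * C)" using Ts delta pC by simp
  then have cl_lt: "cl Ts < p * C" by (simp add: cl left_diff_distrib mult.assoc)
  have G_Ts: "G Ts = q * L / Ts"
    using G P_branch[OF Ts_lower] branch_Ts cl_Ts cl_lt Q[OF Ts(1)] by simp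
  have strict: "G T < G Ts" if "2 * delta \<le> T" "T \<noteq> Ts" for T
  proof (cases "T < Ts")
    case True
    then have "cl T < cl Ts"
      using lost_time_capacity_strict_mono[OF _ True delta p(1) C] that(1) delta by (simp add: cl)
    then show ?thesis using G G_Ts cl_Ts by simp
  next
    case False
    then have "Ts < T" using that(2) by simp
    then have "q * L / T < q * L / Ts" using q L Ts(1) by (simp add: divide_strict_left_mono)
    then have "P T < q * L / Ts" using P_branch[of T] Ts_lower \<open>Ts < T\<close> branch_Ts by simp
    then show ?thesis using G G_Ts by simp
  qed
  have "optset G delta = {Ts}"
    using optset_eq_singleton[of delta Ts G, OF less_imp_le[OF Ts(2)] strict] .
  moreover have "(SUP T \<in> {L / s .. L / (p * s)}. min (q * L / T) (cl T)) = q * L / Ts"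
  proof (rule SUP_min_at_crossing)
    fix T assume T: "T \<in> {L / s .. L / (p * s)}"
    then have "0 < T" using L s by (meson atLeastAtMost_iff divide_pos_pos order_less_le_trans)
    show "cl T \<le> cl Ts" if "T \<le> Ts"
      using lost_time_capacity_strict_mono[OF \<open>0 < T\<close> _ delta p(1) C, of Ts] that
      by (cases "T = Ts") (auto simp: cl)
    show "q * L / T \<le> q * L / Ts" if "Ts \<le> T"
      using that q L Ts(1) by (simp add: divide_left_mono)
  qed (use Ts_lower Ts_upper cl_Ts in auto)
  ultimately show ?thesis
    unfolding Ts_def[symmetric] using G_Ts cl_Ts by simp
qed

text \<open>The very sparse regime is the instance \<open>M = V k\<^sub>0\<close>, \<open>s = V\<close>; the very dense one
  \<open>M = (K - k\<^sub>0) W\<close>, \<open>s = W\<close>.\<close>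

lemma optset_integer_cycles:
  fixes P Q cl G :: "real \<Rightarrow> real"
  assumes L: "0 < L" and s: "0 < s" and delta: "0 < delta" and p: "0 < p" "p < 1" and C: "0 < C"
    and M: "0 \<le> M"
    and P: "\<And>T. 0 < T \<Longrightarrow> P T = M * flow_fraction p (L / (s * T))"
    and Q: "\<And>T. 0 < T \<Longrightarrow> M < Q T"
    and cl: "\<And>T. cl T = (1 - 2 * delta / T) * p * C"
    and G: "\<And>T. G T = min (min (P T) (cl T)) (Q T)"
    and nonempty: "\<exists>j::nat. j \<ge> 1 \<and> M \<le> (1 - 2 * delta / (L / (s * real j))) * p * C"
  shows "(\<forall>T. 2 * delta \<le> T \<longrightarrow> G T \<le> M) \<and>
      (\<forall>T \<in> {L / (s * real j) | j::nat. j \<ge> 1 \<and> M \<le> (1 - 2 * delta / (L / (s * real j))) * p * C}.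
         G T = M) \<and>
      {L / (s * real j) | j::nat. j \<ge> 1 \<and> M \<le> (1 - 2 * delta / (L / (s * real j))) * p * C}
        \<subseteq> optset G delta \<and>
      (0 < M \<longrightarrow> optset G delta =
         {L / (s * real j) | j::nat. j \<ge> 1 \<and> M \<le> (1 - 2 * delta / (L / (s * real j))) * p * C})"
proof -
  define S where
    "S = {L / (s * real j) | j::nat. j \<ge> 1 \<and> M \<le> (1 - 2 * delta / (L / (s * real j))) * p * C}"
  have fraction: "0 < L / (s * T)" "p \<le> flow_fraction p (L / (s * T))"
    "flow_fraction p (L / (s * T)) \<le> 1" if "0 < T" for T
    using flow_fraction_bounds[OF _ p] L s that by simp_all
  have le: "G T \<le> M" if "2 * delta \<le> T" for T
    using G P[of T] fraction(3)[of T] that delta M by (simp add: min_le_iff_disj mult_left_le)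
  have in_S: "2 * delta \<le> T \<and> G T = M" if T_in: "T \<in> S" for T
  proof -
    obtain j :: nat where j: "j \<ge> 1" "T = L / (s * real j)"
      and "M \<le> (1 - 2 * delta / (L / (s * real j))) * p * C" using T_in unfolding S_def by blast
    then have cap: "M \<le> (1 - 2 * delta / T) * p * C" by simp
    have T: "0 < T" using j L s by simp
    have "0 \<le> 1 - 2 * delta / T"
    proof (rule ccontr)
      assume "\<not> 0 \<le> 1 - 2 * delta / T"
      then have "(1 - 2 * delta / T) * (p * C) < 0" using p C by (simp add: mult_neg_pos)
      then show False using cap M by (simp add: mult.assoc)
    qed
    then have "2 * delta \<le> T" using T by (simp add: field_simps)
    moreover have "L / (s * T) = real j" using j L s by simp
    ultimately show ?thesis using G P[OF T] cl cap Q[OF T] j(1) by simp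
  qed
  have "S \<subseteq> optset G delta" unfolding optset_def using in_S le by auto
  moreover have "optset G delta \<subseteq> S" if M_pos: "0 < M"
  proof
    fix T assume "T \<in> optset G delta"
    then have T: "2 * delta \<le> T" "0 < T" and opt: "\<And>T'. 2 * delta \<le> T' \<Longrightarrow> G T' \<le> G T"
      using delta unfolding optset_def by auto
    obtain j :: nat where "j \<ge> 1" "M \<le> (1 - 2 * delta / (L / (s * real j))) * p * C"
      using nonempty by blast
    then have "L / (s * real j) \<in> S" unfolding S_def by blast
    then have "M \<le> G T" using in_S opt by metis
    then have P_ge: "M \<le> P T" and cl_ge: "M \<le> cl T" using G[of T] by linarith+
    have "M * 1 \<le> M * flow_fraction p (L / (s * T))" using P_ge P[OF T(2)] by simp
    then have "flow_fraction p (L / (s * T)) = 1"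
      using M_pos fraction(3)[OF T(2)] by (simp add: mult_le_cancel_left_pos)
    then have "L / (s * T) \<in> \<int>" using flow_fraction_eq_1_iff[OF fraction(1)[OF T(2)] p] by simp
    then obtain z where z: "L / (s * T) = of_int z" by (elim Ints_cases)
    define n where "n = nat z"
    have "0 < z" using z fraction(1)[OF T(2)] by simp
    then have n: "n \<ge> 1" "L / (s * T) = real n" using z by (simp_all add: n_def)
    then have T_eq: "T = L / (s * real n)" using T(2) s by (simp add: field_simps)
    then have "M \<le> (1 - 2 * delta / (L / (s * real n))) * p * C" using cl_ge cl[of T] by simp
    then have "L / (s * real n) \<in> S" unfolding S_def using n(1) by blast
    then show "T \<in> S" using T_eq by simp
  qed
  ultimately show ?thesis using le in_S unfolding S_def by auto
qed

lemma Kbar_pos: "0 < V \<Longrightarrow> 0 < W \<Longrightarrow> 0 < K \<Longrightarrow> 0 < Kbar K V W"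
  by (simp add: Kbar_def)

lemma Cap_pos: "0 < V \<Longrightarrow> 0 < W \<Longrightarrow> 0 < K \<Longrightarrow> 0 < Cap K V W"
  by (simp add: Cap_def Kbar_def)

lemma Cap_eq_congested_flow: "0 < V \<Longrightarrow> 0 < W \<Longrightarrow> (K - Kbar K V W) * W = Cap K V W"
  by (simp add: Kbar_def Cap_def field_simps)

lemma gbar_eq_phi2_first:
  "gbar L V W K k0 delta pi0 T
     = min (min (phi2 L V W K k0 pi0 T) (capline V W K delta pi0 T)) (phi1 L V W K k0 pi0 T)"
  by (simp add: gbar_def min.commute min.left_commute)

locale ring_road =
  fixes L V W K k0 delta pi0 :: real
  assumes L_pos: "0 < L" and V_pos: "0 < V" and W_pos: "0 < W" and K_pos: "0 < K"
    and delta_pos: "0 < delta" and pi0_pos: "0 < pi0" and pi0_lt_1: "pi0 < 1"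
    and k0_nonneg: "0 \<le> k0" and k0_le_K: "k0 \<le> K"
begin

lemma phi1_eq: "0 < T \<Longrightarrow> phi1 L V W K k0 pi0 T = V * k0 * flow_fraction pi0 (L / (V * T))"
  by (rule phi1_eq_flow_fraction[OF L_pos V_pos W_pos K_pos pi0_pos pi0_lt_1])

lemma phi2_eq: "0 < T \<Longrightarrow> phi2 L V W K k0 pi0 T = (K - k0) * W * flow_fraction pi0 (L / (W * T))"
  by (rule phi2_eq_flow_fraction[OF L_pos V_pos W_pos K_pos pi0_pos pi0_lt_1])

lemma phi1_ge: "0 < T \<Longrightarrow> V * k0 * pi0 \<le> phi1 L V W K k0 pi0 T"
  using flow_fraction_bounds(1)[OF _ pi0_pos pi0_lt_1, of "L / (V * T)"] L_pos V_pos k0_nonneg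
  by (simp add: phi1_eq mult_left_mono)

lemma phi2_ge: "0 < T \<Longrightarrow> (K - k0) * W * pi0 \<le> phi2 L V W K k0 pi0 T"
  using flow_fraction_bounds(1)[OF _ pi0_pos pi0_lt_1, of "L / (W * T)"] L_pos W_pos k0_le_K
  by (simp add: phi2_eq mult_left_mono)

lemma Cap_le_congested_flow: "k0 \<le> Kbar K V W \<Longrightarrow> Cap K V W \<le> (K - k0) * W"
  using Cap_eq_congested_flow[OF V_pos W_pos, of K] W_pos by (metis diff_left_mono mult_right_mono less_imp_le)

lemma Cap_le_free_flow: "Kbar K V W \<le> k0 \<Longrightarrow> Cap K V W \<le> V * k0"
  using V_pos by (simp add: Cap_def)

lemma capacity_le_phi1:
  assumes "Kbar K V W \<le> k0" "0 < T"
  shows "pi0 * Cap K V W \<le> phi1 L V W K k0 pi0 T"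
proof -
  have "pi0 * Cap K V W \<le> pi0 * (V * k0)" using Cap_le_free_flow[OF assms(1)] pi0_pos by simp
  also have "\<dots> \<le> phi1 L V W K k0 pi0 T" using phi1_ge[OF assms(2)] by (simp add: mult.commute)
  finally show ?thesis .
qed

lemma capacity_le_phi2:
  assumes "k0 \<le> Kbar K V W" "0 < T"
  shows "pi0 * Cap K V W \<le> phi2 L V W K k0 pi0 T"
proof -
  have "pi0 * Cap K V W \<le> pi0 * ((K - k0) * W)" using Cap_le_congested_flow[OF assms(1)] pi0_pos by simp
  also have "\<dots> \<le> phi2 L V W K k0 pi0 T" using phi2_ge[OF assms(2)] by (simp add: mult.commute)
  finally show ?thesis .
qed

lemma very_sparse_traffic:
  assumes "k0 < pi0 * Kbar K V W"
    and "\<exists>j::nat. j \<ge> 1 \<and> V * k0 \<le> (1 - 2 * delta / (L / (V * real j))) * pi0 * Cap K V W"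
  shows "(\<forall>T. 2 * delta \<le> T \<longrightarrow> gbar L V W K k0 delta pi0 T \<le> V * k0) \<and>
      (\<forall>T \<in> {L / (V * real j) | j::nat. j \<ge> 1 \<and>
              V * k0 \<le> (1 - 2 * delta / (L / (V * real j))) * pi0 * Cap K V W}.
         gbar L V W K k0 delta pi0 T = V * k0) \<and>
      {L / (V * real j) | j::nat. j \<ge> 1 \<and>
              V * k0 \<le> (1 - 2 * delta / (L / (V * real j))) * pi0 * Cap K V W}
        \<subseteq> optset (gbar L V W K k0 delta pi0) delta \<and>
      (0 < k0 \<longrightarrow> optset (gbar L V W K k0 delta pi0) delta =
         {L / (V * real j) | j::nat. j \<ge> 1 \<and>
              V * k0 \<le> (1 - 2 * delta / (L / (V * real j))) * pi0 * Cap K V W})"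
proof -
  have "V * k0 < pi0 * Cap K V W" using assms(1) V_pos by (simp add: Cap_def mult.left_commute)
  also have "\<dots> \<le> (K - k0) * W * pi0"
  proof -
    have "pi0 * Kbar K V W \<le> Kbar K V W" using Kbar_pos[OF V_pos W_pos K_pos] pi0_lt_1 by simp
    then have "k0 \<le> Kbar K V W" using assms(1) by linarith
    then show ?thesis using Cap_le_congested_flow pi0_pos by (simp add: mult.commute)
  qed
  finally have "V * k0 < phi2 L V W K k0 pi0 T" if "0 < T" for T using phi2_ge[OF that] by linarith
  moreover have "0 < V * k0 \<longleftrightarrow> 0 < k0" using V_pos by (simp add: zero_less_mult_iff)
  ultimately show ?thesis
    using optset_integer_cycles[of L V delta pi0 "Cap K V W" "V * k0" "phi1 L V W K k0 pi0"
        "phi2 L V W K k0 pi0" "capline V W K delta pi0" "gbar L V W K k0 delta pi0",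
      OF L_pos V_pos delta_pos pi0_pos pi0_lt_1 Cap_pos[OF V_pos W_pos K_pos] _ phi1_eq _
        capline_def gbar_def assms(2)] V_pos k0_nonneg
    by simp
qed

lemma sparse_traffic:
  assumes "pi0 * Kbar K V W \<le> k0" "k0 < Kbar K V W"
    and "k0 * L / (pi0 * Cap K V W) + 2 * delta < L / (pi0 * V)"
  shows "optset (gbar L V W K k0 delta pi0) delta = {k0 * L / (pi0 * Cap K V W) + 2 * delta} \<and>
      gbar L V W K k0 delta pi0 (k0 * L / (pi0 * Cap K V W) + 2 * delta)
        = k0 * L / (k0 * L / (pi0 * Cap K V W) + 2 * delta) \<and>
      gbar L V W K k0 delta pi0 (k0 * L / (pi0 * Cap K V W) + 2 * delta)
        = capline V W K delta pi0 (k0 * L / (pi0 * Cap K V W) + 2 * delta) \<and>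
      gbar L V W K k0 delta pi0 (k0 * L / (pi0 * Cap K V W) + 2 * delta)
        = (SUP T \<in> {L / V .. L / (pi0 * V)}. min (k0 * L / T) (capline V W K delta pi0 T))"
proof -
  have "pi0 * Cap K V W \<le> V * k0" using assms(1) V_pos by (simp add: Cap_def mult.left_commute)
  moreover have "pi0 * Cap K V W \<le> phi2 L V W K k0 pi0 T" if "0 < T" for T
    using capacity_le_phi2 assms(2) that by simp
  ultimately show ?thesis
    using optset_at_crossing[of L V delta pi0 "Cap K V W" k0 "phi1 L V W K k0 pi0"
        "phi2 L V W K k0 pi0" "capline V W K delta pi0" "gbar L V W K k0 delta pi0",
      OF L_pos V_pos delta_pos pi0_pos pi0_lt_1 Cap_pos[OF V_pos W_pos K_pos] _ phi1_eq _
        capline_def gbar_def assms(3)]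
    by blast
qed

lemma critical_traffic:
  assumes "k0 = Kbar K V W"
  shows "(\<forall>T. 2 * delta \<le> T \<longrightarrow> gbar L V W K k0 delta pi0 T = capline V W K delta pi0 T) \<and>
      optset (gbar L V W K k0 delta pi0) delta = {} \<and>
      (gbar L V W K k0 delta pi0 \<longlongrightarrow> pi0 * Cap K V W) at_top"
proof -
  have g_eq: "gbar L V W K k0 delta pi0 T = capline V W K delta pi0 T" if "2 * delta \<le> T" for T
  proof -
    have T: "0 < T" using that delta_pos by simp
    have "pi0 * Cap K V W \<le> phi1 L V W K k0 pi0 T" using capacity_le_phi1 assms T by simp
    moreover have "pi0 * Cap K V W \<le> phi2 L V W K k0 pi0 T" using capacity_le_phi2 assms T by simp
    moreover have "capline V W K delta pi0 T \<le> pi0 * Cap K V W"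
      using lost_time_capacity_le[OF T] delta_pos pi0_pos Cap_pos[OF V_pos W_pos K_pos]
      by (simp add: capline_def)
    ultimately show ?thesis by (simp add: gbar_def)
  qed
  have not_opt: "T \<notin> optset (gbar L V W K k0 delta pi0) delta" for T
  proof
    assume "T \<in> optset (gbar L V W K k0 delta pi0) delta"
    then have T: "2 * delta \<le> T" "0 < T"
      and "gbar L V W K k0 delta pi0 (T + 1) \<le> gbar L V W K k0 delta pi0 T"
      using delta_pos unfolding optset_def by auto
    moreover have "capline V W K delta pi0 T < capline V W K delta pi0 (T + 1)"
      using lost_time_capacity_strict_mono[OF T(2) _ delta_pos pi0_pos Cap_pos[OF V_pos W_pos K_pos]]
      by (simp add: capline_def)
    ultimately show False using g_eq[of T] g_eq[of "T + 1"] by simp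
  qed
  then have "optset (gbar L V W K k0 delta pi0) delta = {}" by blast
  moreover have "\<forall>\<^sub>F T in at_top. capline V W K delta pi0 T = gbar L V W K k0 delta pi0 T"
    using eventually_ge_at_top[of "2 * delta"] by eventually_elim (simp add: g_eq)
  ultimately show ?thesis using g_eq tendsto_cong capline_tendsto by blast
qed

lemma dense_traffic:
  assumes "Kbar K V W < k0" "k0 \<le> K - pi0 * Cap K V W / W"
    and "(K - k0) * L / (pi0 * Cap K V W) + 2 * delta < L / (pi0 * W)"
  shows "optset (gbar L V W K k0 delta pi0) delta = {(K - k0) * L / (pi0 * Cap K V W) + 2 * delta} \<and>
      gbar L V W K k0 delta pi0 ((K - k0) * L / (pi0 * Cap K V W) + 2 * delta)
        = (K - k0) * L / ((K - k0) * L / (pi0 * Cap K V W) + 2 * delta) \<and>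
      gbar L V W K k0 delta pi0 ((K - k0) * L / (pi0 * Cap K V W) + 2 * delta)
        = capline V W K delta pi0 ((K - k0) * L / (pi0 * Cap K V W) + 2 * delta) \<and>
      gbar L V W K k0 delta pi0 ((K - k0) * L / (pi0 * Cap K V W) + 2 * delta)
        = (SUP T \<in> {L / W .. L / (pi0 * W)}. min ((K - k0) * L / T) (capline V W K delta pi0 T))"
proof -
  have "pi0 * Cap K V W / W \<le> K - k0" using assms(2) by simp
  then have "pi0 * Cap K V W \<le> W * (K - k0)" using W_pos by (simp add: divide_le_eq mult.commute)
  moreover have "pi0 * Cap K V W \<le> phi1 L V W K k0 pi0 T" if "0 < T" for T
    using capacity_le_phi1 assms(1) that by simp
  moreover have "phi2 L V W K k0 pi0 T = W * (K - k0) * flow_fraction pi0 (L / (W * T))" if "0 < T" for T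
    using phi2_eq[OF that] by (simp add: mult.commute)
  ultimately show ?thesis
    using optset_at_crossing[of L W delta pi0 "Cap K V W" "K - k0" "phi2 L V W K k0 pi0"
        "phi1 L V W K k0 pi0" "capline V W K delta pi0" "gbar L V W K k0 delta pi0",
      OF L_pos W_pos delta_pos pi0_pos pi0_lt_1 Cap_pos[OF V_pos W_pos K_pos] _ _ _
        capline_def gbar_eq_phi2_first assms(3)]
    by blast
qed

lemma very_dense_traffic:
  assumes "K - pi0 * Cap K V W / W < k0"
    and "\<exists>j::nat. j \<ge> 1 \<and> (K - k0) * W \<le> (1 - 2 * delta / (L / (W * real j))) * pi0 * Cap K V W"
  shows "(\<forall>T. 2 * delta \<le> T \<longrightarrow> gbar L V W K k0 delta pi0 T \<le> (K - k0) * W) \<and>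
      (\<forall>T \<in> {L / (W * real j) | j::nat. j \<ge> 1 \<and>
              (K - k0) * W \<le> (1 - 2 * delta / (L / (W * real j))) * pi0 * Cap K V W}.
         gbar L V W K k0 delta pi0 T = (K - k0) * W) \<and>
      {L / (W * real j) | j::nat. j \<ge> 1 \<and>
              (K - k0) * W \<le> (1 - 2 * delta / (L / (W * real j))) * pi0 * Cap K V W}
        \<subseteq> optset (gbar L V W K k0 delta pi0) delta \<and>
      (k0 < K \<longrightarrow> optset (gbar L V W K k0 delta pi0) delta =
         {L / (W * real j) | j::nat. j \<ge> 1 \<and>
              (K - k0) * W \<le> (1 - 2 * delta / (L / (W * real j))) * pi0 * Cap K V W})"
proof -
  have "K - k0 < pi0 * Cap K V W / W" using assms(1) by simp
  then have "(K - k0) * W < pi0 * Cap K V W" using W_pos by (simp add: less_divide_eq)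
  also have "\<dots> \<le> V * k0 * pi0"
  proof -
    have "K - Cap K V W / W \<le> K - pi0 * Cap K V W / W"
      using pi0_lt_1 Cap_pos[OF V_pos W_pos K_pos] W_pos by (simp add: divide_right_mono)
    moreover have "K - Cap K V W / W = Kbar K V W"
      using Cap_eq_congested_flow[OF V_pos W_pos, of K] W_pos by (simp add: field_simps)
    ultimately have "Kbar K V W \<le> k0" using assms(1) by linarith
    then show ?thesis using Cap_le_free_flow pi0_pos by (simp add: mult.commute)
  qed
  finally have "(K - k0) * W < phi1 L V W K k0 pi0 T" if "0 < T" for T using phi1_ge[OF that] by linarith
  moreover have "0 < (K - k0) * W \<longleftrightarrow> k0 < K" using W_pos by (simp add: zero_less_mult_iff)
  ultimately show ?thesis
    using optset_integer_cycles[of L W delta pi0 "Cap K V W" "(K - k0) * W" "phi2 L V W K k0 pi0"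
        "phi1 L V W K k0 pi0" "capline V W K delta pi0" "gbar L V W K k0 delta pi0",
      OF L_pos W_pos delta_pos pi0_pos pi0_lt_1 Cap_pos[OF V_pos W_pos K_pos] _ phi2_eq _
        capline_def gbar_eq_phi2_first assms(2)] W_pos k0_le_K
    by simp
qed

end

theorem theorem4p1:
  fixes L V W K k0 delta pi0 :: real
  assumes "L > 0" "V > 0" "W > 0" "K > 0" "delta > 0" "0 < pi0" "pi0 < 1"
    and "0 \<le> k0" "k0 \<le> K"
  shows
   \<comment> \<open>(1) very sparse traffic\<close>
   "(k0 < pi0 * Kbar K V W \<and>
     (\<exists>j::nat. j \<ge> 1 \<and> V * k0 \<le> (1 - 2 * delta / (L / (V * real j))) * pi0 * Cap K V W)
     \<longrightarrow>
      (\<forall>T. 2 * delta \<le> T \<longrightarrow> gbar L V W K k0 delta pi0 T \<le> V * k0) \<and>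
      (\<forall>T \<in> {L / (V * real j) | j::nat. j \<ge> 1 \<and>
              V * k0 \<le> (1 - 2 * delta / (L / (V * real j))) * pi0 * Cap K V W}.
         gbar L V W K k0 delta pi0 T = V * k0) \<and>
      {L / (V * real j) | j::nat. j \<ge> 1 \<and>
              V * k0 \<le> (1 - 2 * delta / (L / (V * real j))) * pi0 * Cap K V W}
        \<subseteq> optset (gbar L V W K k0 delta pi0) delta \<and>
      (0 < k0 \<longrightarrow> optset (gbar L V W K k0 delta pi0) delta =
         {L / (V * real j) | j::nat. j \<ge> 1 \<and>
              V * k0 \<le> (1 - 2 * delta / (L / (V * real j))) * pi0 * Cap K V W}))
   \<and>
   \<comment> \<open>(2) sparse traffic\<close>
   (pi0 * Kbar K V W \<le> k0 \<and> k0 < Kbar K V W \<and>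
     k0 * L / (pi0 * Cap K V W) + 2 * delta < L / (pi0 * V)
     \<longrightarrow>
      optset (gbar L V W K k0 delta pi0) delta = {k0 * L / (pi0 * Cap K V W) + 2 * delta} \<and>
      gbar L V W K k0 delta pi0 (k0 * L / (pi0 * Cap K V W) + 2 * delta)
        = k0 * L / (k0 * L / (pi0 * Cap K V W) + 2 * delta) \<and>
      gbar L V W K k0 delta pi0 (k0 * L / (pi0 * Cap K V W) + 2 * delta)
        = capline V W K delta pi0 (k0 * L / (pi0 * Cap K V W) + 2 * delta) \<and>
      gbar L V W K k0 delta pi0 (k0 * L / (pi0 * Cap K V W) + 2 * delta)
        = (SUP T \<in> {L / V .. L / (pi0 * V)}. min (k0 * L / T) (capline V W K delta pi0 T)))
   \<and>
   \<comment> \<open>(3) critical traffic: optimum at T = infinity\<close>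
   (k0 = Kbar K V W \<longrightarrow>
      (\<forall>T. 2 * delta \<le> T \<longrightarrow> gbar L V W K k0 delta pi0 T = capline V W K delta pi0 T) \<and>
      optset (gbar L V W K k0 delta pi0) delta = {} \<and>
      (gbar L V W K k0 delta pi0 \<longlongrightarrow> pi0 * Cap K V W) at_top)
   \<and>
   \<comment> \<open>(4) dense traffic\<close>
   (Kbar K V W < k0 \<and> k0 \<le> K - pi0 * Cap K V W / W \<and>
     (K - k0) * L / (pi0 * Cap K V W) + 2 * delta < L / (pi0 * W)
     \<longrightarrow>
      optset (gbar L V W K k0 delta pi0) delta = {(K - k0) * L / (pi0 * Cap K V W) + 2 * delta} \<and>
      gbar L V W K k0 delta pi0 ((K - k0) * L / (pi0 * Cap K V W) + 2 * delta)
        = (K - k0) * L / ((K - k0) * L / (pi0 * Cap K V W) + 2 * delta) \<and>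
      gbar L V W K k0 delta pi0 ((K - k0) * L / (pi0 * Cap K V W) + 2 * delta)
        = capline V W K delta pi0 ((K - k0) * L / (pi0 * Cap K V W) + 2 * delta) \<and>
      gbar L V W K k0 delta pi0 ((K - k0) * L / (pi0 * Cap K V W) + 2 * delta)
        = (SUP T \<in> {L / W .. L / (pi0 * W)}. min ((K - k0) * L / T) (capline V W K delta pi0 T)))
   \<and>
   \<comment> \<open>(5) very dense traffic\<close>
   (K - pi0 * Cap K V W / W < k0 \<and>
     (\<exists>j::nat. j \<ge> 1 \<and> (K - k0) * W \<le> (1 - 2 * delta / (L / (W * real j))) * pi0 * Cap K V W)
     \<longrightarrow>
      (\<forall>T. 2 * delta \<le> T \<longrightarrow> gbar L V W K k0 delta pi0 T \<le> (K - k0) * W) \<and>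
      (\<forall>T \<in> {L / (W * real j) | j::nat. j \<ge> 1 \<and>
              (K - k0) * W \<le> (1 - 2 * delta / (L / (W * real j))) * pi0 * Cap K V W}.
         gbar L V W K k0 delta pi0 T = (K - k0) * W) \<and>
      {L / (W * real j) | j::nat. j \<ge> 1 \<and>
              (K - k0) * W \<le> (1 - 2 * delta / (L / (W * real j))) * pi0 * Cap K V W}
        \<subseteq> optset (gbar L V W K k0 delta pi0) delta \<and>
      (k0 < K \<longrightarrow> optset (gbar L V W K k0 delta pi0) delta =
         {L / (W * real j) | j::nat. j \<ge> 1 \<and>
              (K - k0) * W \<le> (1 - 2 * delta / (L / (W * real j))) * pi0 * Cap K V W}))"
proof -
  interpret ring_road L V W K k0 delta pi0 using assms by unfold_locales
  show ?thesis
    by (intro conjI[of "_ \<longrightarrow> _"] impI; (elim conjE)?)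
      (rule very_sparse_traffic sparse_traffic critical_traffic dense_traffic very_dense_traffic;
        assumption)+
qed

end
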